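(* Assume the standing assumptions, let $h=h^\star$, let $D_0\in\mathbb N$ be fixed, and let $\underline\sigma\sim(\underline D_1,\underline P_1,\ldots,\underline D_S,\underline P_S)$ be a state on $\Lambda_N$ as follows: each $\underline P_i$ consists of $M_i$ (even) blocks of length $h^\star$, all $\underline P_i$ begin with the same sign, the $\underline D_i$ are arbitrary arrays of total lengths $D_i$, $D=\sum_iD_i\le D_0$, $M=\sum_iM_i$, $N=Mh^\star+D$. For $i=1,\ldots,S$ let $\underline\delta_i\sim(\underline D_i,\underline Q_i)$ be the state consisting of the single defect $\underline D_i$ followed by a block of $h^\star$-periodic blocks, with total number of sites $$N_i=Mh^\star+2h^\star\sum_{j=i+1}^S\lfloor D_j/2h^\star\rfloor+D_i+2h^\star\Big\lfloor\sum_{j=1}^{i-1}D_j/2h^\star\Big\rfloor .$$ Then, with an implied constant depending only on $D_0$ (and $p,J,h^\star$) and not on $N$, $$F_N(\underline\sigma)=\sum_{i=1}^SF_{N_i}(\underline\delta_i)+O\big((\min_iM_i)^{1-p}\big).$$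
   Context: Fix $p>1$ and $J>0$. For $N\in\mathbb N$ let $\Lambda_N=\mathbb Z/N\mathbb Z$; a state is $\underline\sigma\in\{\pm1\}^{\Lambda_N}$, identified with its $N$-periodic extension to $\mathbb Z$. The energy is $$E_N(\underline\sigma)=-J\sum_{i\in\Lambda_N}\sigma_i\sigma_{i+1}+\sum_{i=1}^N\sum_{j\in\mathbb Z,\,j\neq i}\frac{\sigma_i\sigma_j}{|i-j|^p}.$$ Block arrays: up to a translation (which does not change the energy), every state is described by the cyclic array $(h_1,\ldots,h_M)$ of lengths of consecutive blocks of equal spins, consecutive blocks having opposite signs, $h_1+\cdots+h_M=N$; a concatenation of arrays denotes the state with that cyclic sequence of alternating-sign blocks. For $h\in\mathbb N$, $e(h)=E_{2h}(h,h)/(2h)$. Standing assumptions: either $1<p\le2$, or $p>2$ and $J<J_p:=\frac1{\Gamma(p)}\int_0^\infty\frac{\alpha^{p-1}e^{-\alpha}}{(1-e^{-\alpha})^2}d\alpha$; and $e$ has a unique minimizer $h^\star$ on $\mathbb N$. The renormalized energy is $F_N(\underline\sigma)=E_N(\underline\sigma)-Ne(h^\star)$. *)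

theory Defs
  imports "HOL-Analysis.Analysis"
begin

text \<open>Block arrays: a state on Lambda_N is encoded by a cyclic array hs of positive block
lengths (N = sum_list hs); block number k (counted from 0) carries spin (-1)^k, and the
first block starts at site 1.  The spin configuration is extended N-periodically to the integers.\<close>

definition block_index :: "nat list \<Rightarrow> nat \<Rightarrow> nat" where
  "block_index hs r = (LEAST k. r < sum_list (take (Suc k) hs))"

definition spin_of :: "nat list \<Rightarrow> int \<Rightarrow> real" where
  "spin_of hs x = (-1) ^ block_index hs (nat ((x - 1) mod int (sum_list hs)))"

definition energy :: "real \<Rightarrow> real \<Rightarrow> nat \<Rightarrow> (int \<Rightarrow> real) \<Rightarrow> real" where
  "energy p J N \<sigma> =
     - J * (\<Sum>i=1..int N. \<sigma> i * \<sigma> (i + 1))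
     + (\<Sum>i=1..int N. \<Sum>\<^sub>\<infinity> j\<in>-{i}. \<sigma> i * \<sigma> j / \<bar>real_of_int (i - j)\<bar> powr p)"

definition E_arr :: "real \<Rightarrow> real \<Rightarrow> nat list \<Rightarrow> real" where
  "E_arr p J hs = energy p J (sum_list hs) (spin_of hs)"

definition e_per :: "real \<Rightarrow> real \<Rightarrow> nat \<Rightarrow> real" where
  "e_per p J h = E_arr p J [h, h] / (2 * real h)"

definition J_crit :: "real \<Rightarrow> real" where
  "J_crit p = (1 / Gamma p) *
     integral {0<..} (\<lambda>\<alpha>::real. \<alpha> powr (p - 1) * exp (- \<alpha>) / (1 - exp (- \<alpha>))^2)"

definition standing :: "real \<Rightarrow> real \<Rightarrow> nat \<Rightarrow> bool" where
  "standing p J hstar \<longleftrightarrow> p > 1 \<and> J > 0 \<and> (p \<le> 2 \<or> (p > 2 \<and> J < J_crit p)) \<and>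
     hstar > 0 \<and> (\<forall>h. h > 0 \<and> h \<noteq> hstar \<longrightarrow> e_per p J hstar < e_per p J h)"

definition F_arr :: "real \<Rightarrow> real \<Rightarrow> nat \<Rightarrow> nat list \<Rightarrow> real" where
  "F_arr p J hstar hs = E_arr p J hs - real (sum_list hs) * e_per p J hstar"

end

theory Submission
  imports Defs
begin

text \<open>The energy is a sum over one period of site energies, each coupling a site to the
  sites on its right.  Cutting the chain in the middle of every periodic stretch, the
  window around the i-th defect sees the same configuration as the isolated state
  delta_i up to the middle of the following stretch, so on that window the two site
  energies differ only through interactions across a gap of at least half the shortest
  stretch.  The partial sums of the alternating spins being bounded by h, summation by
  parts against the decaying kernel bounds this difference by O((min M_i)^(1-p)) for
  each half stretch and each defect site.  What is left of delta_i is a stretch of whole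
  periods, whose site energies add up to exactly its length times e(h).\<close>

section \<open>Site energies\<close>

text \<open>Only the interactions with sites on the right are kept, with weight 2: summed over
  a period, the interactions with sites on the left give the same total.\<close>

definition site_energy :: "real \<Rightarrow> real \<Rightarrow> (int \<Rightarrow> real) \<Rightarrow> int \<Rightarrow> real" where
  "site_energy p J s x = - J * s x * s (x + 1) + 2 * (\<Sum>n. s x * s (x + int n + 1) / real (n + 1) powr p)"

lemma summable_bounded_div_Suc_powr:
  fixes f :: "nat \<Rightarrow> real"
  assumes p: "p > 1" and bound: "\<And>n. \<bar>f n\<bar> \<le> B"
  shows "summable (\<lambda>n. norm (f n / real (n + 1) powr p))"
    and "summable (\<lambda>n. f n / real (n + 1) powr p)"
proof -
  have "summable (\<lambda>n::nat. real n powr (- p))"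
    using p by (subst summable_real_powr_iff) auto
  then have "summable (\<lambda>n. B * (1 / real (n + 1) powr p))"
    by (subst (asm) summable_Suc_iff [symmetric])
       (simp add: powr_minus divide_inverse summable_mult)
  moreover have "norm (norm (f n / real (n + 1) powr p)) \<le> B * (1 / real (n + 1) powr p)" for n
    using divide_right_mono [OF bound [of n], of "real (n + 1) powr p"] by (simp add: abs_divide)
  ultimately show "summable (\<lambda>n. norm (f n / real (n + 1) powr p))"
    by (rule summable_comparison_test' [where N = 0])
  then show "summable (\<lambda>n. f n / real (n + 1) powr p)"
    by (rule summable_norm_cancel)
qed

lemma abs_mult_le_one:
  fixes u v :: real
  assumes "\<bar>u\<bar> \<le> 1" "\<bar>v\<bar> \<le> 1"
  shows "\<bar>u * v\<bar> \<le> 1"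
  using assms by (simp add: abs_mult mult_le_one)

lemma infsum_pair_interaction:
  fixes s :: "int \<Rightarrow> real"
  assumes p: "p > 1" and bound: "\<And>y. \<bar>s y\<bar> \<le> 1"
  shows "(\<Sum>\<^sub>\<infinity>j\<in>-{i}. s i * s j / \<bar>real_of_int (i - j)\<bar> powr p)
       = (\<Sum>n. s i * s (i + int n + 1) / real (n + 1) powr p)
         + (\<Sum>n. s i * s (i - int n - 1) / real (n + 1) powr p)"
proof -
  define f where "f = (\<lambda>j. s i * s j / \<bar>real_of_int (i - j)\<bar> powr p)"
  define right where "right n = i + int n + 1" for n :: nat
  define left where "left n = i - int n - 1" for n :: nat
  have has_sum_side: "(f has_sum (\<Sum>n. s i * s (g n) / real (n + 1) powr p)) (range g)"
    if "inj g" and dist: "\<And>n. \<bar>real_of_int (i - g n)\<bar> = real (n + 1)" for g :: "nat \<Rightarrow> int"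
  proof -
    have "((f \<circ> g) has_sum (\<Sum>n. s i * s (g n) / real (n + 1) powr p)) UNIV"
      unfolding comp_def f_def dist
      by (intro norm_summable_imp_has_sum summable_sums
          summable_bounded_div_Suc_powr [OF p, where B = 1] abs_mult_le_one bound)
    then show ?thesis
      by (simp add: has_sum_reindex [OF \<open>inj g\<close>])
  qed
  have disjoint: "range right \<inter> range left = {}"
    by (auto simp: right_def left_def)
  have union: "range right \<union> range left = -{i}"
  proof (intro equalityI subsetI)
    fix j assume "j \<in> -{i}"
    then consider "j > i" | "j < i" by fastforce
    then show "j \<in> range right \<union> range left"
    proof cases
      case 1
      then have "j = right (nat (j - i - 1))" by (simp add: right_def)
      then show ?thesis by blast
    next
      case 2
      then have "j = left (nat (i - j - 1))" by (simp add: left_def)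
      then show ?thesis by blast
    qed
  qed (auto simp: right_def left_def)
  have "(f has_sum (\<Sum>n. s i * s (right n) / real (n + 1) powr p)) (range right)"
    by (rule has_sum_side) (auto simp: inj_def right_def)
  moreover have "(f has_sum (\<Sum>n. s i * s (left n) / real (n + 1) powr p)) (range left)"
    by (rule has_sum_side) (auto simp: inj_def left_def)
  ultimately have "(f has_sum (\<Sum>n. s i * s (right n) / real (n + 1) powr p)
      + (\<Sum>n. s i * s (left n) / real (n + 1) powr p)) (-{i})"
    using has_sum_Un_disjoint [OF _ _ disjoint] union by simp
  then show ?thesis
    unfolding f_def right_def left_def by (rule infsumI)
qed

lemma sum_periodic_shift:
  fixes f :: "int \<Rightarrow> 'a::comm_monoid_add"
  assumes periodic: "\<And>x. f (x + int N) = f x"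
  shows "(\<Sum>i\<in>{1..int N}. f (i + k)) = (\<Sum>i\<in>{1..int N}. f i)"
proof -
  have shift_one: "(\<Sum>i\<in>{1..int N}. g (i + 1)) = (\<Sum>i\<in>{1..int N}. g i)"
    if "\<And>x. g (x + int N) = g x" for g :: "int \<Rightarrow> 'a"
  proof (cases "N = 0")
    case False
    have "(\<Sum>i\<in>{1..int N}. g (i + 1)) = (\<Sum>i\<in>{2..int N + 1}. g i)"
      by (rule sum.reindex_bij_witness [where i = "\<lambda>i. i - 1" and j = "\<lambda>i. i + 1"]) auto
    also have "{2..int N + 1} = insert (int N + 1) {2..int N}"
      and "{1..int N} = insert 1 {2..int N}"
      using False by auto
    moreover have "g (int N + 1) = g 1"
      using that [of 1] by (simp add: add.commute)
    ultimately show ?thesis by simp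
  qed simp
  have nat_shift: "(\<Sum>i\<in>{1..int N}. g (i + int n)) = (\<Sum>i\<in>{1..int N}. g i)"
    if "\<And>x. g (x + int N) = g x" for g :: "int \<Rightarrow> 'a" and n
  proof (induction n)
    case (Suc n)
    have "(\<Sum>i\<in>{1..int N}. g (i + int (Suc n))) = (\<Sum>i\<in>{1..int N}. g (i + 1 + int n))"
      by (simp add: algebra_simps)
    also have "\<dots> = (\<Sum>i\<in>{1..int N}. g (i + int n))"
      by (rule shift_one [of "\<lambda>i. g (i + int n)"]) (metis that add.commute add.left_commute)
    finally show ?case using Suc.IH by simp
  qed simp
  show ?thesis
  proof (cases "k \<ge> 0")
    case True
    then show ?thesis
      using nat_shift [where g = f and n = "nat k", OF periodic] by simp
  next
    case False
    have "(\<Sum>i\<in>{1..int N}. f (i + int (nat (- k)) + k)) = (\<Sum>i\<in>{1..int N}. f (i + k))"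
      by (rule nat_shift [of "\<lambda>i. f (i + k)"]) (metis periodic add.commute add.left_commute)
    then show ?thesis
      using False by simp
  qed
qed

lemma energy_eq_sum_site_energy:
  fixes s :: "int \<Rightarrow> real"
  assumes p: "p > 1" and bound: "\<And>y. \<bar>s y\<bar> \<le> 1" and periodic: "\<And>x. s (x + int N) = s x"
  shows "energy p J N s = (\<Sum>x\<in>{1..int N}. site_energy p J s x)"
proof -
  define right where "right i = (\<lambda>n. s i * s (i + int n + 1) / real (n + 1) powr p)" for i
  define left where "left i = (\<lambda>n. s i * s (i - int n - 1) / real (n + 1) powr p)" for i
  have summable: "summable (right i)" "summable (left i)" for i
    unfolding right_def left_def
    by (intro summable_bounded_div_Suc_powr(2) [OF p, where B = 1] abs_mult_le_one bound)+
  have "(\<Sum>i\<in>{1..int N}. suminf (left i)) = (\<Sum>n. \<Sum>i\<in>{1..int N}. left i n)"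
    using summable by (simp add: suminf_sum)
  also have "\<dots> = (\<Sum>n. \<Sum>i\<in>{1..int N}. right i n)"
  proof (intro arg_cong [where f = suminf] ext)
    fix n
    have "(\<Sum>i\<in>{1..int N}. left (i + (int n + 1)) n) = (\<Sum>i\<in>{1..int N}. left i n)"
      unfolding left_def
      by (rule sum_periodic_shift) (metis periodic add.commute add_diff_eq diff_add_eq)
    then show "(\<Sum>i\<in>{1..int N}. left i n) = (\<Sum>i\<in>{1..int N}. right i n)"
      by (simp add: left_def right_def algebra_simps)
  qed
  also have "\<dots> = (\<Sum>i\<in>{1..int N}. suminf (right i))"
    using summable by (simp add: suminf_sum)
  finally have left_eq_right: "(\<Sum>i\<in>{1..int N}. suminf (left i)) = (\<Sum>i\<in>{1..int N}. suminf (right i))" .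
  have "energy p J N s = - J * (\<Sum>i=1..int N. s i * s (i + 1))
      + (\<Sum>i=1..int N. suminf (right i) + suminf (left i))"
    unfolding energy_def right_def left_def using infsum_pair_interaction [where s = s, OF p bound] by (simp only:)
  also have "\<dots> = - J * (\<Sum>i=1..int N. s i * s (i + 1)) + 2 * (\<Sum>i=1..int N. suminf (right i))"
    by (simp only: sum.distrib left_eq_right mult_2)
  also have "\<dots> = (\<Sum>i\<in>{1..int N}. - J * (s i * s (i + 1)) + 2 * suminf (right i))"
    by (simp only: sum.distrib sum_distrib_left)
  finally show ?thesis
    by (simp add: site_energy_def right_def mult.assoc)
qed

lemma site_energy_shift: "site_energy p J (\<lambda>y. s (y + c)) x = site_energy p J s (x + c)"
  unfolding site_energy_def by (simp add: ac_simps)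

lemma site_energy_uminus: "site_energy p J (\<lambda>y. - s y) x = site_energy p J s x"
  unfolding site_energy_def by simp

lemma site_energy_periodic:
  assumes "\<And>y. s (y + int N) = s y"
  shows "site_energy p J s (x + int N) = site_energy p J s x"
  using site_energy_shift [of p J s "int N" x] assms by simp

lemma sum_periodic_window:
  fixes f :: "int \<Rightarrow> 'a::comm_monoid_add"
  assumes periodic: "\<And>x. f (x + int N) = f x"
  shows "(\<Sum>x\<in>{1..int N}. f x) = (\<Sum>x\<in>{1 + c..int N + c}. f x)"
proof -
  have "(\<Sum>x\<in>{1..int N}. f x) = (\<Sum>x\<in>{1..int N}. f (x + c))"
    using sum_periodic_shift [where f = f, OF periodic] by simp
  also have "\<dots> = (\<Sum>x\<in>{1 + c..int N + c}. f x)"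
    by (rule sum.reindex_bij_witness [where i = "\<lambda>x. x - c" and j = "\<lambda>x. x + c"]) auto
  finally show ?thesis .
qed

lemma sum_int_interval_split:
  fixes f :: "int \<Rightarrow> 'a::comm_monoid_add"
  assumes "a \<le> b + 1" "b \<le> c"
  shows "(\<Sum>x\<in>{a..c}. f x) = (\<Sum>x\<in>{a..b}. f x) + (\<Sum>x\<in>{b + 1..c}. f x)"
proof -
  have "{a..c} = {a..b} \<union> {b + 1..c}"
    using assms by auto
  then show ?thesis
    by (simp add: sum.union_disjoint [symmetric] del: atLeastAtMost_iff)
qed

lemma sum_int_consecutive_intervals:
  fixes e :: "nat \<Rightarrow> int" and f :: "int \<Rightarrow> 'a::comm_monoid_add"
  assumes "\<And>i. i < n \<Longrightarrow> e i \<le> e (Suc i)"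
  shows "(\<Sum>x\<in>{e 0 + 1..e n}. f x) = (\<Sum>i\<in>{1..n}. \<Sum>x\<in>{e (i - 1) + 1..e i}. f x)"
  using assms
proof (induction n)
  case (Suc n)
  have "e 0 \<le> e n"
    using Suc.prems by (induction n) (auto intro: order_trans)
  then have "(\<Sum>x\<in>{e 0 + 1..e (Suc n)}. f x) = (\<Sum>x\<in>{e 0 + 1..e n}. f x) + (\<Sum>x\<in>{e n + 1..e (Suc n)}. f x)"
    using Suc.prems by (intro sum_int_interval_split) auto
  with Suc show ?case by simp
qed simp

section \<open>Power-law tails\<close>

definition tail_const :: "real \<Rightarrow> real" where
  "tail_const p = 1 + 1 / (p - 1)"

lemma tail_const_pos:
  assumes "p > 1" shows "tail_const p > 0"
proof -
  have "1 / (p - 1) > 0" using assms by simp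
  then show ?thesis unfolding tail_const_def by linarith
qed

lemma inverse_powr_le_powr_diff:
  fixes p x :: real
  assumes p: "p > 1" and x: "x \<ge> 1"
  shows "1 / (x + 1) powr p \<le> (x powr (1 - p) - (x + 1) powr (1 - p)) / (p - 1)"
proof -
  have "\<exists>z. x < z \<and> z < x + 1 \<and>
      (x + 1) powr (1 - p) - x powr (1 - p) = ((x + 1) - x) * ((1 - p) * z powr (1 - p - 1))"
  proof (rule MVT2 [where f' = "\<lambda>z. (1 - p) * z powr (1 - p - 1)"])
    fix z assume "x \<le> z"
    then show "((\<lambda>z. z powr (1 - p)) has_real_derivative (1 - p) * z powr (1 - p - 1)) (at z)"
      using x by (intro has_real_derivative_powr) auto
  qed simp
  then obtain z where z: "x < z" "z < x + 1"
    and mvt: "(x + 1) powr (1 - p) - x powr (1 - p) = (1 - p) * z powr (- p)"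
    by auto
  have "1 / (x + 1) powr p = (x + 1) powr (- p)"
    by (simp add: powr_minus divide_inverse)
  also have "\<dots> \<le> z powr (- p)"
    using z x p by (intro powr_mono2') auto
  also have "\<dots> = (x powr (1 - p) - (x + 1) powr (1 - p)) / (p - 1)"
    using mvt p by (simp add: field_simps)
  finally show ?thesis .
qed

lemma sum_inverse_powr_shift_le:
  fixes p L :: real
  assumes p: "p > 1" and L: "L \<ge> 1"
  shows "(\<Sum>n<K. 1 / (L + real n + 1) powr p) \<le> (L powr (1 - p) - (L + real K) powr (1 - p)) / (p - 1)"
proof (induction K)
  case (Suc K)
  have "1 / (L + real K + 1) powr p
      \<le> ((L + real K) powr (1 - p) - (L + real K + 1) powr (1 - p)) / (p - 1)"
    using inverse_powr_le_powr_diff [OF p, of "L + real K"] L by simp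
  with Suc show ?case
    by (simp add: diff_divide_distrib add_ac)
qed simp

lemma summable_inverse_powr_shift:
  fixes p L :: real
  assumes p: "p > 1" and L: "L \<ge> 1"
  shows "summable (\<lambda>n::nat. 1 / (L + real n) powr p)"
proof (rule summable_comparison_test' [where N = 0])
  show "summable (\<lambda>n. norm (1 / real (n + 1) powr p))"
    by (rule summable_bounded_div_Suc_powr(1) [OF p, where B = 1]) simp
  fix n :: nat
  have "real (n + 1) powr p \<le> (L + real n) powr p"
    using L p by (intro powr_mono2) auto
  then show "norm (1 / (L + real n) powr p) \<le> norm (1 / real (n + 1) powr p)"
    by (simp add: frac_le)
qed

lemma suminf_inverse_powr_shift_le:
  fixes p L :: real
  assumes p: "p > 1" and L: "L \<ge> 1"
  shows "(\<Sum>n. 1 / (L + real n) powr p) \<le> tail_const p * L powr (1 - p)"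
proof (rule suminf_le_const [OF summable_inverse_powr_shift [OF p L]])
  fix K :: nat
  have first: "1 / L powr p \<le> L powr (1 - p)"
    using L powr_mono [of "- p" "1 - p" L] by (simp add: powr_minus divide_inverse)
  have "(\<Sum>n<K. 1 / (L + real n) powr p) \<le> (\<Sum>n<Suc K. 1 / (L + real n) powr p)"
    by (intro sum_mono2) auto
  also have "\<dots> = 1 / L powr p + (\<Sum>n<K. 1 / (L + real n + 1) powr p)"
    by (subst sum.lessThan_Suc_shift) (simp add: ac_simps)
  also have "\<dots> \<le> L powr (1 - p) + L powr (1 - p) / (p - 1)"
  proof (rule add_mono [OF first order_trans [OF sum_inverse_powr_shift_le [OF p L]]])
    show "(L powr (1 - p) - (L + real K) powr (1 - p)) / (p - 1) \<le> L powr (1 - p) / (p - 1)"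
      using p by (intro divide_right_mono) auto
  qed
  also have "\<dots> = tail_const p * L powr (1 - p)"
    unfolding tail_const_def by (simp add: field_simps)
  finally show "(\<Sum>n<K. 1 / (L + real n) powr p) \<le> tail_const p * L powr (1 - p)" .
qed

lemma abs_suminf_le_tail:
  fixes g :: "nat \<Rightarrow> real" and p L R B :: real
  assumes p: "p > 1" and L: "1 \<le> L" "L \<le> R" and B: "B \<ge> 0"
    and g: "\<And>n. \<bar>g n\<bar> \<le> B / (R + real n) powr p"
  shows "\<bar>suminf g\<bar> \<le> B * tail_const p * L powr (1 - p)"
proof -
  have R: "R \<ge> 1" using L by simp
  have summable: "summable (\<lambda>n. B * (1 / (R + real n) powr p))"
    using summable_inverse_powr_shift [OF p R] by (rule summable_mult)
  have "\<bar>suminf g\<bar> \<le> (\<Sum>n. B * (1 / (R + real n) powr p))"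
    using norm_suminf_le [of g, OF _ summable] g by simp
  also have "\<dots> = B * (\<Sum>n. 1 / (R + real n) powr p)"
    using summable_inverse_powr_shift [OF p R] by (rule suminf_mult)
  also have "\<dots> \<le> B * (tail_const p * R powr (1 - p))"
    using suminf_inverse_powr_shift_le [OF p R] B by (rule mult_left_mono)
  also have "\<dots> \<le> B * (tail_const p * L powr (1 - p))"
    using L p B tail_const_pos [OF p]
    by (intro mult_left_mono powr_mono2') auto
  finally show ?thesis by (simp add: mult.assoc)
qed

section \<open>Locality of the site energy\<close>

lemma site_energy_diff_eq_tail:
  fixes s t :: "int \<Rightarrow> real"
  assumes p: "p > 1" and bs: "\<And>y. \<bar>s y\<bar> \<le> 1" and bt: "\<And>y. \<bar>t y\<bar> \<le> 1"
    and agree: "\<And>y. x \<le> y \<Longrightarrow> y \<le> c \<Longrightarrow> s y = t y" and xc: "x < c"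
  shows "summable (\<lambda>n. s x * (s (c + 1 + int n) - t (c + 1 + int n)) / real_of_int (c + 1 + int n - x) powr p)"
    and "site_energy p J s x - site_energy p J t x
       = 2 * (\<Sum>n. s x * (s (c + 1 + int n) - t (c + 1 + int n)) / real_of_int (c + 1 + int n - x) powr p)"
proof -
  define f where "f n = s x * (s (x + int n + 1) - t (x + int n + 1)) / real (n + 1) powr p" for n
  have "\<bar>s x * (s y - t y)\<bar> \<le> 2" for y
  proof -
    have "\<bar>s x\<bar> * \<bar>s y - t y\<bar> \<le> 1 * 2"
      using bs [of x] bs [of y] bt [of y] by (intro mult_mono) auto
    then show ?thesis by (simp add: abs_mult)
  qed
  then have summable_f: "summable f"
    unfolding f_def by (intro summable_bounded_div_Suc_powr(2) [OF p])
  define k where "k = nat (c - x)"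
  have kx: "x + int k = c" unfolding k_def using xc by simp
  have shift: "(\<lambda>n. f (n + k))
      = (\<lambda>n. s x * (s (c + 1 + int n) - t (c + 1 + int n)) / real_of_int (c + 1 + int n - x) powr p)"
  proof
    fix n
    have site: "x + int (n + k) + 1 = c + 1 + int n"
      and dist: "real (n + k + 1) = real_of_int (c + 1 + int n - x)"
      using kx by auto
    show "f (n + k) = s x * (s (c + 1 + int n) - t (c + 1 + int n)) / real_of_int (c + 1 + int n - x) powr p"
      unfolding f_def site dist ..
  qed
  show "summable (\<lambda>n. s x * (s (c + 1 + int n) - t (c + 1 + int n)) / real_of_int (c + 1 + int n - x) powr p)"
    using summable_ignore_initial_segment [OF summable_f, of k] unfolding shift .
  have initial_zero: "(\<Sum>i<k. f i) = 0"
    using kx agree by (intro sum.neutral) (auto simp: f_def)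
  have summable_s: "summable (\<lambda>n. s x * s (x + int n + 1) / real (n + 1) powr p)"
    and summable_t: "summable (\<lambda>n. t x * t (x + int n + 1) / real (n + 1) powr p)"
    by (intro summable_bounded_div_Suc_powr(2) [OF p, where B = 1] abs_mult_le_one bs bt)+
  have near: "s x = t x" "s (x + 1) = t (x + 1)"
    using agree xc by auto
  have "site_energy p J s x - site_energy p J t x
      = 2 * ((\<Sum>n. s x * s (x + int n + 1) / real (n + 1) powr p) - (\<Sum>n. t x * t (x + int n + 1) / real (n + 1) powr p))"
    unfolding site_energy_def using near by (simp add: algebra_simps)
  also have "\<dots> = 2 * suminf f"
    using suminf_diff [OF summable_s summable_t] near
    unfolding f_def by (simp add: algebra_simps diff_divide_distrib)
  also have "suminf f = (\<Sum>n. f (n + k))"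
    using suminf_split_initial_segment [OF summable_f, of k] initial_zero by simp
  finally show "site_energy p J s x - site_energy p J t x
       = 2 * (\<Sum>n. s x * (s (c + 1 + int n) - t (c + 1 + int n)) / real_of_int (c + 1 + int n - x) powr p)"
    unfolding shift .
qed

lemma sum_site_energy_diff_eq_suminf:
  fixes s t :: "int \<Rightarrow> real"
  assumes p: "p > 1" and bs: "\<And>y. \<bar>s y\<bar> \<le> 1" and bt: "\<And>y. \<bar>t y\<bar> \<le> 1"
    and agree: "\<And>y. a \<le> y \<Longrightarrow> y \<le> c \<Longrightarrow> s y = t y" and bc: "b < c"
  shows "(\<Sum>x\<in>{a..b}. site_energy p J s x - site_energy p J t x)
    = 2 * (\<Sum>n. \<Sum>x\<in>{a..b}. s x * (s (c + 1 + int n) - t (c + 1 + int n)) / real_of_int (c + 1 + int n - x) powr p)"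
proof -
  have "(\<Sum>x\<in>{a..b}. site_energy p J s x - site_energy p J t x)
      = (\<Sum>x\<in>{a..b}. 2 * (\<Sum>n. s x * (s (c + 1 + int n) - t (c + 1 + int n)) / real_of_int (c + 1 + int n - x) powr p))"
    using agree bc by (intro sum.cong site_energy_diff_eq_tail(2) [OF p bs bt]) auto
  also have "\<dots> = 2 * (\<Sum>x\<in>{a..b}. \<Sum>n. s x * (s (c + 1 + int n) - t (c + 1 + int n)) / real_of_int (c + 1 + int n - x) powr p)"
    by (simp add: sum_distrib_left)
  also have "\<dots> = 2 * (\<Sum>n. \<Sum>x\<in>{a..b}. s x * (s (c + 1 + int n) - t (c + 1 + int n)) / real_of_int (c + 1 + int n - x) powr p)"
    by (subst suminf_sum, rule site_energy_diff_eq_tail(1) [OF p bs bt]) (use agree bc in auto)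
  finally show ?thesis .
qed

text \<open>Summation by parts.\<close>

lemma abs_sum_mult_monotone_le:
  fixes s w :: "int \<Rightarrow> real"
  assumes ab: "a \<le> b"
    and suffix: "\<And>k. a \<le> k \<Longrightarrow> k \<le> b \<Longrightarrow> \<bar>\<Sum>x\<in>{k..b}. s x\<bar> \<le> H"
    and mono: "\<And>x y. a \<le> x \<Longrightarrow> x \<le> y \<Longrightarrow> y \<le> b \<Longrightarrow> w x \<le> w y"
    and nonneg: "\<And>x. a \<le> x \<Longrightarrow> x \<le> b \<Longrightarrow> w x \<ge> 0"
  shows "\<bar>\<Sum>x\<in>{a..b}. s x * w x\<bar> \<le> H * w b"
proof -
  have by_parts: "\<bar>(\<Sum>x\<in>{k..b}. s x * w x) - w k * (\<Sum>x\<in>{k..b}. s x)\<bar> \<le> H * (w b - w k)"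
    if "k = b - int d" "a \<le> k" for d k
    using that
  proof (induction d arbitrary: k)
    case (Suc d)
    define k' where "k' = k + 1"
    have k': "k' = b - int d" "k' \<le> b" "a \<le> k'" using Suc.prems unfolding k'_def by auto
    have split: "{k..b} = insert k {k'..b}" and new: "k \<notin> {k'..b}"
      using k' unfolding k'_def by auto
    have "\<bar>(w k' - w k) * (\<Sum>x\<in>{k'..b}. s x)\<bar> \<le> (w k' - w k) * H"
      using suffix [OF k'(3,2)] mono [of k k'] Suc.prems k'
      by (simp add: abs_mult mult_left_mono k'_def)
    moreover have "(\<Sum>x\<in>{k..b}. s x * w x) - w k * (\<Sum>x\<in>{k..b}. s x)
        = ((\<Sum>x\<in>{k'..b}. s x * w x) - w k' * (\<Sum>x\<in>{k'..b}. s x)) + (w k' - w k) * (\<Sum>x\<in>{k'..b}. s x)"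
      unfolding split using new by (simp add: algebra_simps)
    ultimately show ?case
      using Suc.IH [OF k'(1,3)] by (simp add: algebra_simps)
  qed simp
  have "\<bar>w a * (\<Sum>x\<in>{a..b}. s x)\<bar> \<le> w a * H"
    using suffix [of a] nonneg [of a] ab by (simp add: abs_mult mult_left_mono)
  with by_parts [of a "nat (b - a)"] ab show ?thesis
    by (simp add: algebra_simps)
qed

text \<open>Only the bonds from the window [a, b] to sites beyond c survive in the difference.
  Their kernel increases along the window, so summation by parts trades the spins of
  the window for their suffix sums.\<close>

lemma sum_site_energy_diff_le:
  fixes s t :: "int \<Rightarrow> real"
  assumes p: "p > 1" and bs: "\<And>y. \<bar>s y\<bar> \<le> 1" and bt: "\<And>y. \<bar>t y\<bar> \<le> 1"
    and agree: "\<And>y. a \<le> y \<Longrightarrow> y \<le> c \<Longrightarrow> s y = t y" and ab: "a \<le> b"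
    and L: "1 \<le> L" "L \<le> real_of_int (c - b)"
    and suffix: "\<And>k. a \<le> k \<Longrightarrow> k \<le> b \<Longrightarrow> \<bar>\<Sum>x\<in>{k..b}. s x\<bar> \<le> H"
  shows "\<bar>\<Sum>x\<in>{a..b}. site_energy p J s x - site_energy p J t x\<bar> \<le> 4 * H * tail_const p * L powr (1 - p)"
proof -
  have bc: "b < c" using L by linarith
  have H: "H \<ge> 0" using suffix [of b] ab by simp
  define G where "G = (\<lambda>n. \<Sum>x\<in>{a..b}. s x * (s (c + 1 + int n) - t (c + 1 + int n))
      / real_of_int (c + 1 + int n - x) powr p)"
  have G_repr: "(\<Sum>x\<in>{a..b}. site_energy p J s x - site_energy p J t x) = 2 * suminf G"
    unfolding G_def by (rule sum_site_energy_diff_eq_suminf [OF p bs bt agree bc])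
  have "\<bar>G n\<bar> \<le> (2 * H) / (real_of_int (c + 1 - b) + real n) powr p" for n
  proof -
    define u where "u = s (c + 1 + int n) - t (c + 1 + int n)"
    define w where "w x = 1 / real_of_int (c + 1 + int n - x) powr p" for x
    have "\<bar>\<Sum>x\<in>{a..b}. s x * w x\<bar> \<le> H * w b"
    proof (rule abs_sum_mult_monotone_le [OF ab suffix])
      fix x y assume "a \<le> x" "x \<le> y" "y \<le> b"
      then have "real_of_int (c + 1 + int n - y) powr p \<le> real_of_int (c + 1 + int n - x) powr p"
        using p bc by (intro powr_mono2) auto
      then show "w x \<le> w y"
        unfolding w_def using bc \<open>x \<le> y\<close> \<open>y \<le> b\<close> by (intro divide_left_mono mult_pos_pos) auto
    qed (simp_all add: w_def)
    moreover have "\<bar>u\<bar> \<le> 2"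
      unfolding u_def using bs [of "c + 1 + int n"] bt [of "c + 1 + int n"] by linarith
    moreover have "G n = u * (\<Sum>x\<in>{a..b}. s x * w x)"
      unfolding G_def u_def w_def by (simp add: sum_distrib_left algebra_simps)
    ultimately have "\<bar>G n\<bar> \<le> 2 * (H * w b)"
      by (simp add: abs_mult mult_mono)
    then show ?thesis
      unfolding w_def by (simp add: algebra_simps)
  qed
  then have "\<bar>suminf G\<bar> \<le> (2 * H) * tail_const p * L powr (1 - p)"
    using L H by (intro abs_suminf_le_tail [OF p, where R = "real_of_int (c + 1 - b)"]) auto
  then show ?thesis
    unfolding G_repr by (simp add: abs_mult)
qed

lemma sum_site_energy_diff_le_card:
  fixes s t :: "int \<Rightarrow> real"
  assumes p: "p > 1" and bs: "\<And>y. \<bar>s y\<bar> \<le> 1" and bt: "\<And>y. \<bar>t y\<bar> \<le> 1"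
    and agree: "\<And>y. a \<le> y \<Longrightarrow> y \<le> c \<Longrightarrow> s y = t y" and ab: "a \<le> b"
    and L: "1 \<le> L" "L \<le> real_of_int (c - b)"
  shows "\<bar>\<Sum>x\<in>{a..b}. site_energy p J s x - site_energy p J t x\<bar>
      \<le> 4 * real_of_int (b - a + 1) * tail_const p * L powr (1 - p)"
proof (rule sum_site_energy_diff_le [OF p bs bt agree ab L])
  fix k assume "a \<le> k" "k \<le> b"
  have "\<bar>\<Sum>x\<in>{k..b}. s x\<bar> \<le> (\<Sum>x\<in>{k..b}. 1)"
    using bs by (intro order.trans [OF sum_abs sum_mono])
  also have "\<dots> = real_of_int (b - k + 1)"
    using \<open>k \<le> b\<close> by simp
  finally show "\<bar>\<Sum>x\<in>{k..b}. s x\<bar> \<le> real_of_int (b - a + 1)"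
    using \<open>a \<le> k\<close> by linarith
qed

section \<open>The alternating profile of period 2h\<close>

definition alt_spin :: "nat \<Rightarrow> int \<Rightarrow> real" where
  "alt_spin h y = (if even ((y - 1) div int h) then 1 else -1)"

text \<open>A discrete antiderivative of the alternating profile, rising and falling
  between 0 and h; it shows that all partial sums of the profile are bounded by h.\<close>

definition alt_sawtooth :: "nat \<Rightarrow> int \<Rightarrow> real" where
  "alt_sawtooth h y =
    (if even (y div int h) then real_of_int (y mod int h) else real h - real_of_int (y mod int h))"

lemma abs_alt_spin_le: "\<bar>alt_spin h y\<bar> \<le> 1"
  unfolding alt_spin_def by simp

lemma alt_spin_shift:
  assumes "h > 0"
  shows "alt_spin h (y + int h * j) = (if even j then alt_spin h y else - alt_spin h y)"
proof -
  have "(y + int h * j - 1) div int h = (y - 1) div int h + j"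
    using div_mult_self1 [of "int h" "y - 1" j] assms by (simp add: algebra_simps)
  then show ?thesis unfolding alt_spin_def by auto
qed

lemma alt_spin_periodic:
  assumes "h > 0" "even j"
  shows "alt_spin h (y + int h * j) = alt_spin h y"
  using alt_spin_shift [OF assms(1)] assms(2) by simp

lemma alt_sawtooth_bounds:
  assumes "h > 0"
  shows "0 \<le> alt_sawtooth h y" "alt_sawtooth h y \<le> real h"
proof -
  have "0 \<le> y mod int h" "y mod int h < int h"
    using assms by auto
  then show "0 \<le> alt_sawtooth h y" "alt_sawtooth h y \<le> real h"
    unfolding alt_sawtooth_def by auto
qed

lemma alt_sawtooth_diff:
  assumes h: "h > 0"
  shows "alt_sawtooth h (y + 1) - alt_sawtooth h y = alt_spin h (y + 1)"
proof -
  define q where "q = y div int h"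
  define r where "r = y mod int h"
  have y: "y = r + q * int h" and r: "0 \<le> r" "r < int h"
    using h unfolding q_def r_def by auto
  have spin: "alt_spin h (y + 1) = (if even q then 1 else -1)"
    unfolding alt_spin_def q_def by simp
  have before: "alt_sawtooth h y = (if even q then real_of_int r else real h - real_of_int r)"
    unfolding alt_sawtooth_def q_def r_def by simp
  show ?thesis
  proof (cases "r + 1 < int h")
    case True
    then have "(y + 1) div int h = q" "(y + 1) mod int h = r + 1"
      using r h by (simp_all add: y add.assoc [symmetric] add.commute [of _ 1])
    then have "alt_sawtooth h (y + 1) = (if even q then real_of_int r + 1 else real h - real_of_int r - 1)"
      unfolding alt_sawtooth_def by simp
    then show ?thesis
      unfolding before spin by simp
  next
    case False
    then have "y + 1 = (q + 1) * int h"
      using r y by (simp add: algebra_simps)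
    then have "(y + 1) div int h = q + 1" "(y + 1) mod int h = 0"
      using h by simp_all
    then have "alt_sawtooth h (y + 1) = (if even q then real h else 0)"
      unfolding alt_sawtooth_def by simp
    then show ?thesis
      unfolding before spin using False r by simp
  qed
qed

lemma sum_int_telescope:
  fixes f :: "int \<Rightarrow> 'a::ab_group_add"
  assumes "k \<le> b + 1"
  shows "(\<Sum>x\<in>{k..b}. f x - f (x - 1)) = f b - f (k - 1)"
proof -
  define g where "g i = f (k - 1 + int i)" for i
  have "(\<Sum>x\<in>{k..b}. f x - f (x - 1)) = (\<Sum>i = 0..<nat (b - k + 1). g (Suc i) - g i)"
    unfolding g_def
    by (rule sum.reindex_bij_witness [where i = "\<lambda>i. k + int i" and j = "\<lambda>x. nat (x - k)"])
       (auto simp: algebra_simps)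
  also have "\<dots> = g (nat (b - k + 1)) - g 0"
    by (rule sum_Suc_diff') simp
  finally show ?thesis
    using assms by (simp add: g_def)
qed

lemma abs_sum_alt_spin_le:
  assumes h: "h > 0"
  shows "\<bar>\<Sum>x\<in>{k..b}. alt_spin h (x - c)\<bar> \<le> real h"
proof (cases "k \<le> b + 1")
  case True
  have "(\<Sum>x\<in>{k..b}. alt_spin h (x - c))
      = (\<Sum>x\<in>{k..b}. alt_sawtooth h (x - c) - alt_sawtooth h (x - 1 - c))"
    using alt_sawtooth_diff [OF h, of "x - 1 - c" for x] by (simp add: algebra_simps)
  also have "\<dots> = alt_sawtooth h (b - c) - alt_sawtooth h (k - 1 - c)"
    using sum_int_telescope [OF True, of "\<lambda>x. alt_sawtooth h (x - c)"] by (simp add: algebra_simps)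
  finally show ?thesis
    using alt_sawtooth_bounds [OF h, of "b - c"] alt_sawtooth_bounds [OF h, of "k - 1 - c"] by simp
qed simp

lemma sum_site_energy_diff_le_alt:
  fixes s t :: "int \<Rightarrow> real"
  assumes p: "p > 1" and h: "h > 0" and bs: "\<And>y. \<bar>s y\<bar> \<le> 1" and bt: "\<And>y. \<bar>t y\<bar> \<le> 1"
    and agree: "\<And>y. a \<le> y \<Longrightarrow> y \<le> c \<Longrightarrow> s y = t y"
    and L: "1 \<le> L" "L \<le> real_of_int (c - b)"
    and alt: "\<And>y. a \<le> y \<Longrightarrow> y \<le> b \<Longrightarrow> s y = alt_spin h (y - start)"
  shows "\<bar>\<Sum>x\<in>{a..b}. site_energy p J s x - site_energy p J t x\<bar> \<le> 4 * real h * tail_const p * L powr (1 - p)"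
proof (cases "a \<le> b")
  case True
  show ?thesis
  proof (rule sum_site_energy_diff_le [OF p bs bt agree True L])
    fix k assume "a \<le> k" "k \<le> b"
    then have "(\<Sum>x\<in>{k..b}. s x) = (\<Sum>x\<in>{k..b}. alt_spin h (x - start))"
      by (intro sum.cong refl alt) auto
    then show "\<bar>\<Sum>x\<in>{k..b}. s x\<bar> \<le> real h"
      using abs_sum_alt_spin_le [OF h] by simp
  qed
qed (use tail_const_pos [OF p] in simp)

lemma site_energy_alt_spin_periodic:
  assumes h: "h > 0"
  shows "site_energy p J (alt_spin h) (x + int h) = site_energy p J (alt_spin h) x"
proof -
  have "alt_spin h (y + int h) = - alt_spin h y" for y
    using alt_spin_shift [OF h, of y 1] by simp
  then show ?thesis
    using site_energy_shift [of p J "alt_spin h" "int h" x] site_energy_uminus [of p J "alt_spin h" x]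
    by simp
qed

lemma sum_site_energy_alt_spin_blocks:
  assumes h: "h > 0"
  shows "(\<Sum>x\<in>{a + 1..a + int (j * h)}. site_energy p J (alt_spin h) x)
       = real j * (\<Sum>x\<in>{1..int h}. site_energy p J (alt_spin h) x)"
proof (induction j)
  case (Suc j)
  define m where "m = a + int (j * h)"
  have am: "a \<le> m" and upper: "a + int (Suc j * h) = m + int h"
    unfolding m_def by simp_all
  have split: "{a + 1..m + int h} = {a + 1..m} \<union> {m + 1..m + int h}"
    using am by auto
  have "(\<Sum>x\<in>{a + 1..a + int (Suc j * h)}. site_energy p J (alt_spin h) x)
      = (\<Sum>x\<in>{a + 1..m}. site_energy p J (alt_spin h) x) + (\<Sum>x\<in>{m + 1..m + int h}. site_energy p J (alt_spin h) x)"
    unfolding upper split by (rule sum.union_disjoint) auto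
  also have "(\<Sum>x\<in>{m + 1..m + int h}. site_energy p J (alt_spin h) x)
      = (\<Sum>x\<in>{1..int h}. site_energy p J (alt_spin h) x)"
    using sum_periodic_window [where f = "site_energy p J (alt_spin h)",
        OF site_energy_alt_spin_periodic [OF h], of m]
    by (simp add: add.commute)
  finally show ?case
    using Suc.IH unfolding m_def by (simp add: algebra_simps)
qed simp

section \<open>Spins of block arrays\<close>

lemma sum_list_take_mono:
  fixes xs :: "nat list"
  assumes "m \<le> n"
  shows "sum_list (take m xs) \<le> sum_list (take n xs)"
proof -
  have "take n xs = take m xs @ take (n - m) (drop m xs)"
    using assms by (metis le_add_diff_inverse take_add)
  then show ?thesis by simp
qed

lemma block_index_eqI:
  assumes "sum_list (take k hs) \<le> r" "r < sum_list (take (Suc k) hs)"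
  shows "block_index hs r = k"
  unfolding block_index_def
proof (rule Least_equality)
  fix j assume j: "r < sum_list (take (Suc j) hs)"
  show "k \<le> j"
  proof (rule ccontr)
    assume "\<not> k \<le> j"
    then have "sum_list (take (Suc j) hs) \<le> sum_list (take k hs)"
      by (intro sum_list_take_mono) simp
    with j assms(1) show False by simp
  qed
qed (rule assms(2))

lemma block_index_append_replicate:
  assumes h: "h > 0" and r: "r < m * h"
  shows "block_index (A @ replicate m h @ C) (sum_list A + r) = length A + r div h"
proof (rule block_index_eqI)
  have q: "r div h < m" using r h by (simp add: div_less_iff_less_mult)
  then have "take (length A + r div h) (A @ replicate m h @ C) = A @ replicate (r div h) h"
    and "take (Suc (length A + r div h)) (A @ replicate m h @ C) = A @ replicate (Suc (r div h)) h"
    by (simp_all add: Suc_le_eq min_def)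
  moreover have "r div h * h \<le> r" "r < h + r div h * h"
    using mod_div_mult_eq [of r h] mod_less_divisor [OF h, of r] by linarith+
  ultimately show "sum_list (take (length A + r div h) (A @ replicate m h @ C)) \<le> sum_list A + r"
    and "sum_list A + r < sum_list (take (Suc (length A + r div h)) (A @ replicate m h @ C))"
    by (simp_all add: sum_list_replicate mult.commute)
qed

lemma block_index_append_middle:
  assumes r: "r < sum_list B"
  shows "block_index (A @ B @ C) (sum_list A + r) = length A + block_index B r"
proof -
  define P where "P k \<longleftrightarrow> r < sum_list (take (Suc k) B)" for k
  define k where "k = block_index B r"
  have k_Least: "k = (LEAST k. P k)" unfolding k_def block_index_def P_def ..
  have B: "B \<noteq> []" using r by auto
  have P_last: "P (length B - 1)" unfolding P_def using r B by simp
  have "P k" unfolding k_Least using P_last by (rule LeastI)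
  have "k \<le> length B - 1" unfolding k_Least using P_last by (rule Least_le)
  then have k_less: "k < length B" using B by (cases B) auto
  have "sum_list (take k B) \<le> r"
  proof (cases k)
    case (Suc j)
    have "\<not> P j" unfolding k_Least by (rule not_less_Least) (use Suc k_Least in simp)
    then show ?thesis unfolding P_def using Suc by simp
  qed simp
  moreover have "take (length A + k) (A @ B @ C) = A @ take k B"
    and "take (Suc (length A + k)) (A @ B @ C) = A @ take (Suc k) B"
    using k_less by (simp_all add: Suc_le_eq)
  ultimately show ?thesis
    unfolding k_def [symmetric] using \<open>P k\<close> unfolding P_def by (intro block_index_eqI) auto
qed

lemma abs_spin_of_le: "\<bar>spin_of hs y\<bar> \<le> 1"
  unfolding spin_of_def by simp

lemma spin_of_periodic: "spin_of hs (x + int (sum_list hs)) = spin_of hs x"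
proof -
  have "x + int (sum_list hs) - 1 = (x - 1) + int (sum_list hs)" by simp
  then show ?thesis unfolding spin_of_def by (simp only: mod_add_self2)
qed

lemma spin_of_defect:
  fixes A B C :: "nat list"
  assumes y: "1 \<le> y" "y \<le> int (sum_list B)"
  shows "spin_of (A @ B @ C) (int (sum_list A) + y) = (-1) ^ length A * (-1) ^ block_index B (nat (y - 1))"
proof -
  define r where "r = nat (y - 1)"
  have r: "r < sum_list B" unfolding r_def using y by linarith
  have site: "int (sum_list A) + y - 1 = int (sum_list A + r)"
    unfolding r_def using y by simp
  have reduced: "(int (sum_list A) + y - 1) mod int (sum_list (A @ B @ C)) = int (sum_list A + r)"
    unfolding site using r by (intro mod_pos_pos_trivial) simp_all
  show ?thesis
    unfolding spin_of_def reduced nat_int block_index_append_middle [OF r]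
    by (simp add: power_add r_def)
qed

lemma spin_of_periodic_part:
  fixes A B C :: "nat list"
  assumes h: "h > 0" and y: "1 \<le> y" "y \<le> int (m * h)"
  shows "spin_of (A @ B @ replicate m h @ C) (int (sum_list A + sum_list B) + y)
       = (-1) ^ (length A + length B) * alt_spin h y"
proof -
  define r where "r = nat (y - 1)"
  have r: "r < m * h" unfolding r_def using y by linarith
  have site: "int (sum_list A + sum_list B) + y - 1 = int (sum_list (A @ B) + r)"
    unfolding r_def using y by simp
  have "sum_list (A @ B) + r < sum_list (A @ B @ replicate m h @ C)"
    using r by (simp add: sum_list_replicate)
  then have reduced: "(int (sum_list A + sum_list B) + y - 1) mod int (sum_list (A @ B @ replicate m h @ C))
      = int (sum_list (A @ B) + r)"
    unfolding site by (intro mod_pos_pos_trivial) (simp, simp only: of_nat_less_iff)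
  have block: "block_index (A @ B @ replicate m h @ C) (sum_list (A @ B) + r) = length (A @ B) + r div h"
    using block_index_append_replicate [OF h r, of "A @ B" C] by simp
  have alt: "alt_spin h y = (-1) ^ (r div h)"
  proof -
    have "(y - 1) div int h = int (r div h)"
      unfolding r_def using y by (simp add: zdiv_int)
    then show ?thesis unfolding alt_spin_def by simp
  qed
  show ?thesis
    unfolding spin_of_def reduced nat_int block alt by (simp add: power_add)
qed

lemma spin_of_pair_eq_alt_spin:
  assumes h: "h > 0"
  shows "spin_of [h, h] y = alt_spin h y"
proof -
  define q where "q = (y - 1) div int (2 * h)"
  define r where "r = (y - 1) mod int (2 * h)"
  have r: "0 \<le> r" "r < int (2 * h)"
    using h unfolding r_def by auto
  have "y - 1 = int (2 * h) * q + r"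
    unfolding q_def r_def by (simp only: mult_div_mod_eq)
  then have y: "y = (r + 1) + int h * (2 * q)"
    by (simp add: algebra_simps)
  have period: "int (sum_list [h, h]) = int (2 * h)"
    by simp
  have "spin_of [h, h] y = spin_of [h, h] (r + 1)"
    unfolding spin_of_def period r_def by simp
  also have "\<dots> = spin_of ([] @ [] @ replicate 2 h @ []) (int (sum_list [] + sum_list []) + (r + 1))"
    by (simp add: numeral_2_eq_2)
  also have "\<dots> = alt_spin h (r + 1)"
    using spin_of_periodic_part [OF h, of "r + 1" 2 "[]" "[]" "[]"] r by simp
  also have "\<dots> = alt_spin h y"
    unfolding y by (rule alt_spin_periodic [OF h, symmetric]) simp
  finally show ?thesis .
qed

lemma e_per_eq_site_energy_average:
  assumes p: "p > 1" and h: "h > 0"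
  shows "e_per p J h = (\<Sum>x\<in>{1..int h}. site_energy p J (alt_spin h) x) / real h"
proof -
  have pair: "spin_of [h, h] = alt_spin h"
    using spin_of_pair_eq_alt_spin [OF h] by auto
  have periodic: "alt_spin h (x + int (2 * h)) = alt_spin h x" for x
    using alt_spin_periodic [OF h, of 2 x] by (simp add: ac_simps)
  have "E_arr p J [h, h] = energy p J (2 * h) (alt_spin h)"
    unfolding E_arr_def pair by (simp add: mult_2)
  also have "\<dots> = (\<Sum>x\<in>{1..int (2 * h)}. site_energy p J (alt_spin h) x)"
    by (rule energy_eq_sum_site_energy [where s = "alt_spin h", OF p abs_alt_spin_le periodic])
  also have "\<dots> = 2 * (\<Sum>x\<in>{1..int h}. site_energy p J (alt_spin h) x)"
    using sum_site_energy_alt_spin_blocks [OF h, where a = 0 and j = 2 and p = p and J = J] by simp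
  finally show ?thesis
    unfolding e_per_def using h by simp
qed

lemma F_arr_eq_sum_site_energy:
  assumes p: "p > 1"
  shows "F_arr p J h hs = (\<Sum>x\<in>{1 + c..int (sum_list hs) + c}. site_energy p J (spin_of hs) x - e_per p J h)"
proof -
  have "F_arr p J h hs = (\<Sum>x\<in>{1..int (sum_list hs)}. site_energy p J (spin_of hs) x - e_per p J h)"
    unfolding F_arr_def E_arr_def
    by (simp add: energy_eq_sum_site_energy [where s = "spin_of hs", OF p abs_spin_of_le spin_of_periodic] sum_subtractf)
  also have "\<dots> = (\<Sum>x\<in>{1 + c..int (sum_list hs) + c}. site_energy p J (spin_of hs) x - e_per p J h)"
    using site_energy_periodic [where s = "spin_of hs", OF spin_of_periodic]
    by (intro sum_periodic_window) simp
  finally show ?thesis .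
qed

lemma div_padding_length:
  fixes h M a b D :: nat
  assumes "h > 0"
  shows "(M * h + 2 * h * a + D + 2 * h * b - D) div h = M + 2 * a + 2 * b"
proof -
  have "M * h + 2 * h * a + D + 2 * h * b - D = h * (M + 2 * a + 2 * b)"
    by (simp add: algebra_simps)
  then show ?thesis
    using assms by simp
qed

lemma sum_site_energy_alt_spin_eq_e_per:
  assumes p: "p > 1" and h: "h > 0"
  shows "(\<Sum>y\<in>{a + 1..a + int (j * h)}. site_energy p J (\<lambda>y. alt_spin h (y - c)) y - e_per p J h) = 0"
proof -
  have "(\<Sum>y\<in>{a + 1..a + int (j * h)}. site_energy p J (\<lambda>y. alt_spin h (y - c)) y)
      = (\<Sum>y\<in>{a + 1..a + int (j * h)}. site_energy p J (alt_spin h) (y - c))"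
    using site_energy_shift [of p J "alt_spin h" "- c"] by simp
  also have "\<dots> = (\<Sum>x\<in>{(a - c) + 1..(a - c) + int (j * h)}. site_energy p J (alt_spin h) x)"
    by (rule sum.reindex_bij_witness [where i = "\<lambda>x. x + c" and j = "\<lambda>y. y - c"]) auto
  also have "\<dots> = real j * (\<Sum>x\<in>{1..int h}. site_energy p J (alt_spin h) x)"
    by (rule sum_site_energy_alt_spin_blocks [OF h])
  also have "\<dots> = real (j * h) * e_per p J h"
    using h by (simp add: e_per_eq_site_energy_average [OF p h])
  finally show ?thesis
    by (simp add: sum_subtractf)
qed

lemma abs_sum_site_energy_periodic_stretch_le:
  fixes d :: "int \<Rightarrow> real"
  assumes p: "p > 1" and h: "h > 0" and bd: "\<And>y. \<bar>d y\<bar> \<le> 1"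
    and L: "1 \<le> L" "L \<le> real_of_int (c - (a + int (j * h)))"
    and alt: "\<And>y. a + 1 \<le> y \<Longrightarrow> y \<le> c \<Longrightarrow> d y = alt_spin h (y - start)"
  shows "\<bar>\<Sum>y\<in>{a + 1..a + int (j * h)}. site_energy p J d y - e_per p J h\<bar>
      \<le> 4 * real h * tail_const p * L powr (1 - p)"
proof -
  let ?rho = "\<lambda>y. alt_spin h (y - start)"
  have "(\<Sum>y\<in>{a + 1..a + int (j * h)}. site_energy p J d y - e_per p J h)
      = (\<Sum>y\<in>{a + 1..a + int (j * h)}. site_energy p J d y - site_energy p J ?rho y)
        + (\<Sum>y\<in>{a + 1..a + int (j * h)}. site_energy p J ?rho y - e_per p J h)"
    by (simp add: sum.distrib [symmetric])
  also have "(\<Sum>y\<in>{a + 1..a + int (j * h)}. site_energy p J ?rho y - e_per p J h) = 0"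
    by (rule sum_site_energy_alt_spin_eq_e_per [OF p h])
  moreover have "\<bar>\<Sum>y\<in>{a + 1..a + int (j * h)}. site_energy p J d y - site_energy p J ?rho y\<bar>
      \<le> 4 * real h * tail_const p * L powr (1 - p)"
  proof (rule sum_site_energy_diff_le_alt [where start = start, OF p h bd abs_alt_spin_le _ L])
    have "1 \<le> c - (a + int (j * h))"
      using L by (metis of_int_1 of_int_le_iff order_trans)
    then show "d y = alt_spin h (y - start)" if "a + 1 \<le> y" "y \<le> a + int (j * h)" for y
      using that by (intro alt) linarith+
  qed (use alt in auto)
  ultimately show ?thesis
    by simp
qed

section \<open>Comparison around a single defect\<close>

lemma abs_sum_site_energy_window_diff_le:
  fixes s d :: "int \<Rightarrow> real" and h D ml mr :: nat and L :: real
  assumes p: "p > 1" and h: "h > 0" and D: "D \<ge> 1"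
    and bs: "\<And>y. \<bar>s y\<bar> \<le> 1" and bd: "\<And>y. \<bar>d y\<bar> \<le> 1"
    and agree: "\<And>y. 1 - int (ml * h) \<le> y \<Longrightarrow> y \<le> int D + int (2 * mr * h) \<Longrightarrow> s y = d y"
    and left: "\<And>y. 1 - int (ml * h) \<le> y \<Longrightarrow> y \<le> 0 \<Longrightarrow> s y = alt_spin h y"
    and right: "\<And>y. int D + 1 \<le> y \<Longrightarrow> y \<le> int D + int (mr * h) \<Longrightarrow> s y = alt_spin h (y - int D)"
    and L: "1 \<le> L" "L \<le> real (mr * h)"
  shows "\<bar>\<Sum>y\<in>{1 - int (ml * h)..int D + int (mr * h)}. site_energy p J s y - site_energy p J d y\<bar>
    \<le> (8 * real h + 4 * real D) * tail_const p * L powr (1 - p)"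
proof -
  define T where "T = tail_const p * L powr (1 - p)"
  define g where "g t y = site_energy p J t y" for t y
  have gap_right: "L \<le> real_of_int (int (2 * mr * h) - int (mr * h))"
    using L(2) by (simp add: algebra_simps)
  have "L \<le> real (2 * mr * h)"
    using L(2) by (rule order_trans) simp
  then have gap_defect: "L \<le> real_of_int (int D + int (2 * mr * h) - int D)"
    and gap_left: "L \<le> real_of_int (int D + int (2 * mr * h) - 0)"
    by simp_all
  have left_part: "\<bar>\<Sum>y\<in>{1 - int (ml * h)..0}. g s y - g d y\<bar> \<le> 4 * real h * T"
    unfolding g_def T_def mult.assoc [symmetric]
    by (rule sum_site_energy_diff_le_alt [where start = 0, OF p h bs bd _ L(1) gap_left])
       (auto intro!: agree left)
  have "\<bar>\<Sum>y\<in>{1..int D}. g s y - g d y\<bar> \<le> 4 * real_of_int (int D - 1 + 1) * tail_const p * L powr (1 - p)"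
    unfolding g_def
  proof (rule sum_site_energy_diff_le_card [OF p bs bd _ _ L(1) gap_defect])
    fix y assume "1 \<le> y" "y \<le> int D + int (2 * mr * h)"
    then show "s y = d y" by (intro agree) linarith+
  qed (use D in simp)
  then have defect_part: "\<bar>\<Sum>y\<in>{1..int D}. g s y - g d y\<bar> \<le> 4 * real D * T"
    unfolding T_def by (simp add: mult.assoc)
  have right_part: "\<bar>\<Sum>y\<in>{int D + 1..int D + int (mr * h)}. g s y - g d y\<bar> \<le> 4 * real h * T"
    unfolding g_def T_def mult.assoc [symmetric]
  proof (rule sum_site_energy_diff_le_alt [where start = "int D", OF p h bs bd _ L(1)])
    fix y assume "int D + 1 \<le> y" "y \<le> int D + int (2 * mr * h)"
    then show "s y = d y" by (intro agree) linarith+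
  qed (use gap_right in \<open>auto intro!: right\<close>)
  have "(\<Sum>y\<in>{1 - int (ml * h)..int D + int (mr * h)}. g s y - g d y)
      = (\<Sum>y\<in>{1 - int (ml * h)..0}. g s y - g d y) + (\<Sum>y\<in>{1..int D}. g s y - g d y)
        + (\<Sum>y\<in>{int D + 1..int D + int (mr * h)}. g s y - g d y)"
    using sum_int_interval_split [of "1 - int (ml * h)" 0 "int D + int (mr * h)" "\<lambda>y. g s y - g d y"]
      sum_int_interval_split [of 1 "int D" "int D + int (mr * h)" "\<lambda>y. g s y - g d y"]
    by simp
  then have "\<bar>\<Sum>y\<in>{1 - int (ml * h)..int D + int (mr * h)}. g s y - g d y\<bar>
      \<le> 4 * real h * T + 4 * real D * T + 4 * real h * T"
    using left_part defect_part right_part by linarith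
  then show ?thesis
    unfolding g_def T_def by (simp add: algebra_simps)
qed

text \<open>The defect occupies the sites 1, ..., D.  The window of the chain s from the middle
  of the stretch before the defect to the middle of the stretch after it carries the
  energy of the isolated state d, up to the surplus of the longer periodic stretch of d,
  which costs exactly its length times e(h).\<close>

lemma local_comparison_bound:
  fixes s d :: "int \<Rightarrow> real" and h D ml mr K :: nat and L :: real
  assumes p: "p > 1" and h: "h > 0" and D: "D \<ge> 1"
    and bs: "\<And>y. \<bar>s y\<bar> \<le> 1" and bd: "\<And>y. \<bar>d y\<bar> \<le> 1"
    and agree: "\<And>y. 1 - int (ml * h) \<le> y \<Longrightarrow> y \<le> int D + int (2 * mr * h) \<Longrightarrow> s y = d y"
    and left: "\<And>y. 1 - int (ml * h) \<le> y \<Longrightarrow> y \<le> 0 \<Longrightarrow> s y = alt_spin h y"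
    and right: "\<And>y. int D + 1 \<le> y \<Longrightarrow> y \<le> int D + int (mr * h) \<Longrightarrow> s y = alt_spin h (y - int D)"
    and tail: "\<And>y. int D + 1 \<le> y \<Longrightarrow> y \<le> int D + int (K * h) \<Longrightarrow> d y = alt_spin h (y - int D)"
    and K: "ml + mr \<le> K" and L: "1 \<le> L" "L \<le> real (ml * h)" "L \<le> real (mr * h)"
  shows "\<bar>(\<Sum>y\<in>{1 - int (ml * h)..int D + int (mr * h)}. site_energy p J s y - site_energy p J d y)
           - (\<Sum>y\<in>{int D + int (mr * h) + 1..int D + int (K * h) - int (ml * h)}.
                site_energy p J d y - e_per p J h)\<bar>
         \<le> (12 * real h + 4 * real D) * tail_const p * L powr (1 - p)"
proof -
  obtain j where j: "K = ml + mr + j" using K le_Suc_ex by blast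
  let ?T = "tail_const p * L powr (1 - p)"
  have upper: "int D + int (K * h) - int (ml * h) = (int D + int (mr * h)) + int (j * h)"
    using j by (simp add: algebra_simps)
  have stretch: "\<bar>\<Sum>y\<in>{int D + int (mr * h) + 1..(int D + int (mr * h)) + int (j * h)}.
      site_energy p J d y - e_per p J h\<bar> \<le> 4 * real h * ?T"
    unfolding mult.assoc [symmetric]
  proof (rule abs_sum_site_energy_periodic_stretch_le [where start = "int D" and c = "int D + int (K * h)",
        OF p h bd L(1)])
    show "L \<le> real_of_int (int D + int (K * h) - (int D + int (mr * h) + int (j * h)))"
      using L(2) j by (simp add: algebra_simps)
    fix y assume "int D + int (mr * h) + 1 \<le> y" "y \<le> int D + int (K * h)"
    then show "d y = alt_spin h (y - int D)" by (intro tail) linarith+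
  qed
  have window: "\<bar>\<Sum>y\<in>{1 - int (ml * h)..int D + int (mr * h)}. site_energy p J s y - site_energy p J d y\<bar>
      \<le> (8 * real h + 4 * real D) * ?T"
    unfolding mult.assoc [symmetric]
    by (rule abs_sum_site_energy_window_diff_le [OF p h D bs bd agree left right L(1,3)])
  have "(8 * real h + 4 * real D) * ?T + 4 * real h * ?T = (12 * real h + 4 * real D) * ?T"
    by (simp add: algebra_simps)
  with add_mono [OF window stretch] show ?thesis
    unfolding upper mult.assoc [symmetric] by (smt (verit) abs_triangle_ineq4)
qed

section \<open>A chain of defects separated by periodic stretches\<close>

text \<open>In the notation of the theorem, chain is the state \<open>\<sigma>\<close>, and padded i below is the
  isolated state \<open>\<delta>\<close> i, the i-th defect followed by K i blocks of length h.\<close>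

locale defect_chain =
  fixes h S :: nat and Dl :: "nat \<Rightarrow> nat list" and Mb :: "nat \<Rightarrow> nat"
  assumes h_pos: "h > 0" and S_pos: "S \<ge> 1"
    and defects: "\<forall>i\<in>{1..S}. Dl i \<noteq> [] \<and> (\<forall>x\<in>set (Dl i). x > 0)"
    and stretches: "\<forall>i\<in>{1..S}. Mb i > 0 \<and> even (Mb i)"
    and same_parity: "\<forall>i\<in>{1..S}. \<forall>j\<in>{1..S}.
          even ((\<Sum>k=1..<i. length (Dl k) + Mb k) + length (Dl i))
          = even ((\<Sum>k=1..<j. length (Dl k) + Mb k) + length (Dl j))"
    and total_even: "even (\<Sum>i=1..S. length (Dl i) + Mb i)"
begin

definition piece :: "nat \<Rightarrow> nat list" where
  "piece i = Dl i @ replicate (Mb i) h"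

definition chain :: "nat list" where
  "chain = concat (map piece [1..<S + 1])"

lemma chain_eq: "chain = concat (map (\<lambda>i. Dl i @ replicate (Mb i) h) [1..<S + 1])"
  unfolding chain_def piece_def [abs_def] ..

definition prefix :: "nat \<Rightarrow> nat list" where
  "prefix i = concat (map piece [1..<i])"

definition offset :: "nat \<Rightarrow> nat" where
  "offset i = sum_list (prefix i)"

definition prev :: "nat \<Rightarrow> nat" where
  "prev i = (if i = 1 then S else i - 1)"

lemma chain_split:
  assumes "i \<in> {1..S}"
  shows "chain = prefix i @ Dl i @ replicate (Mb i) h @ concat (map piece [Suc i..<S + 1])"
proof -
  have "[1..<S + 1] = [1..<i] @ i # [Suc i..<S + 1]"
    using assms upt_add_eq_append [of 1 i "S + 1 - i"] by (simp add: upt_conv_Cons)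
  then show ?thesis
    unfolding chain_def prefix_def piece_def by simp
qed

lemma chain_eq_prefix: "chain = prefix (S + 1)"
  unfolding chain_def prefix_def ..

lemma prefix_Suc: "i \<ge> 1 \<Longrightarrow> prefix (Suc i) = prefix i @ piece i"
  unfolding prefix_def by simp

lemma offset_Suc: "i \<ge> 1 \<Longrightarrow> offset (Suc i) = offset i + sum_list (Dl i) + Mb i * h"
  unfolding offset_def by (simp add: prefix_Suc piece_def sum_list_replicate)

lemma offset_1: "offset 1 = 0"
  unfolding offset_def prefix_def by simp

lemma length_prefix: "length (prefix i) = (\<Sum>k=1..<i. length (Dl k) + Mb k)"
proof -
  have "length (prefix i) = sum_list (map (\<lambda>k. length (Dl k) + Mb k) [1..<i])"
    unfolding prefix_def length_concat map_map piece_def by (simp add: comp_def)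
  then show ?thesis
    by (simp flip: sum_set_upt_conv_sum_list_nat)
qed

lemma prev_mem: "i \<in> {1..S} \<Longrightarrow> prev i \<in> {1..S}"
  unfolding prev_def using S_pos by auto

lemma stretch_even: "i \<in> {1..S} \<Longrightarrow> even (Mb i)"
  using stretches by blast

lemma stretch_ge_2: "i \<in> {1..S} \<Longrightarrow> Mb i \<ge> 2"
  using stretches by (fastforce elim!: evenE)

lemma defect_size_pos:
  assumes "i \<in> {1..S}" shows "sum_list (Dl i) \<ge> 1"
proof -
  obtain a t where "Dl i = a # t" "a > 0"
    using defects assms by (cases "Dl i") auto
  then show ?thesis by simp
qed

text \<open>The parity hypotheses say that every defect is followed by a stretch of the
  same phase, and the stretches being of even length this forces all prefixes and all
  defects to consist of an even number of blocks.\<close>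

lemma even_length_prefix_defect: "i \<in> {1..S} \<Longrightarrow> even (length (prefix i) + length (Dl i))"
proof -
  assume i: "i \<in> {1..S}"
  have S: "S \<in> {1..S}" using S_pos by simp
  have "length (prefix (Suc S)) = length (prefix S) + length (Dl S) + Mb S"
    using S_pos by (simp add: prefix_Suc piece_def)
  moreover have "length (prefix (Suc S)) = (\<Sum>i=1..S. length (Dl i) + Mb i)"
    unfolding length_prefix by (simp add: atLeastLessThanSuc_atLeastAtMost)
  ultimately have "even (length (prefix S) + length (Dl S))"
    using total_even stretch_even [OF S] by auto
  then show ?thesis
    using same_parity i S unfolding length_prefix by blast
qed

lemma even_length_prefix: "i \<in> {1..S} \<Longrightarrow> even (length (prefix i))"
proof (cases "i = 1")
  case False
  assume i: "i \<in> {1..S}"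
  then obtain j where j: "i = Suc j" "j \<in> {1..S}" using False by (cases i) auto
  then have "length (prefix i) = (length (prefix j) + length (Dl j)) + Mb j"
    by (simp add: prefix_Suc piece_def)
  then show ?thesis
    using even_length_prefix_defect [OF j(2)] stretch_even [OF j(2)] by simp
qed (simp add: prefix_def)

lemma even_length_defect: "i \<in> {1..S} \<Longrightarrow> even (length (Dl i))"
  using even_length_prefix_defect even_length_prefix by fastforce

lemma spin_chain_defect:
  assumes i: "i \<in> {1..S}" and y: "1 \<le> y" "y \<le> int (sum_list (Dl i))"
  shows "spin_of chain (int (offset i) + y) = (-1) ^ block_index (Dl i) (nat (y - 1))"
  using spin_of_defect [OF y, of "prefix i"] even_length_prefix [OF i]
  unfolding chain_split [OF i] offset_def by simp

lemma spin_chain_stretch: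
  assumes i: "i \<in> {1..S}" and y: "1 \<le> y" "y \<le> int (Mb i * h)"
  shows "spin_of chain (int (offset i + sum_list (Dl i)) + y) = alt_spin h y"
  using spin_of_periodic_part [OF h_pos y, of "prefix i" "Dl i"] even_length_prefix_defect [OF i]
  unfolding chain_split [OF i] offset_def by simp

lemma offset_prev:
  assumes i: "i \<in> {1..S}"
  shows "int (offset i) + (if i = 1 then int (sum_list chain) else 0)
    = int (offset (prev i) + sum_list (Dl (prev i))) + int (Mb (prev i) * h)"
proof (cases "i = 1")
  case True
  then show ?thesis
    unfolding prev_def chain_eq_prefix using offset_Suc [OF S_pos] offset_1 by (simp add: offset_def)
next
  case False
  then obtain j where "i = Suc j" "j \<ge> 1" using i by (cases i) auto
  then show ?thesis
    unfolding prev_def using offset_Suc by simp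
qed

lemma spin_chain_prev_stretch:
  assumes i: "i \<in> {1..S}" and y: "1 - int (Mb (prev i) * h) \<le> y" "y \<le> 0"
  shows "spin_of chain (int (offset i) + y) = alt_spin h y"
proof -
  have "spin_of chain (int (offset i) + y) = spin_of chain (int (offset i) + (if i = 1 then int (sum_list chain) else 0) + y)"
  proof (cases "i = 1")
    case True
    then have "int (offset i) + (if i = 1 then int (sum_list chain) else 0) + y
        = (int (offset i) + y) + int (sum_list chain)"
      by simp
    then show ?thesis
      by (simp only: spin_of_periodic)
  qed simp
  also have "\<dots> = spin_of chain (int (offset (prev i) + sum_list (Dl (prev i))) + (int (Mb (prev i) * h) + y))"
    unfolding offset_prev [OF i] by (simp add: ac_simps)
  also have "\<dots> = alt_spin h (int (Mb (prev i) * h) + y)"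
    using y by (intro spin_chain_stretch prev_mem i) auto
  also have "\<dots> = alt_spin h y"
    using alt_spin_periodic [OF h_pos, of "int (Mb (prev i))" y] stretch_even [OF prev_mem [OF i]]
    by (simp add: ac_simps)
  finally show ?thesis .
qed


end

locale padded_defect_chain = defect_chain +
  fixes K :: "nat \<Rightarrow> nat"
  assumes padding: "\<forall>i\<in>{1..S}. even (K i) \<and> (\<Sum>i=1..S. Mb i) \<le> K i"
begin

definition padded :: "nat \<Rightarrow> nat list" where
  "padded i = Dl i @ replicate (K i) h"

definition left_half :: "nat \<Rightarrow> nat" where
  "left_half i = Mb (prev i) div 2"

definition right_half :: "nat \<Rightarrow> nat" where
  "right_half i = Mb i div 2"

definition window :: "nat \<Rightarrow> int set" where
  "window i = {1 - int (left_half i * h)..int (sum_list (Dl i)) + int (right_half i * h)}"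

definition surplus :: "nat \<Rightarrow> int set" where
  "surplus i = {int (sum_list (Dl i)) + int (right_half i * h) + 1
      ..int (sum_list (Dl i)) + int (K i * h) - int (left_half i * h)}"

lemma stretch_le_padding:
  assumes "i \<in> {1..S}" "j \<in> {1..S}" shows "Mb j \<le> K i"
proof -
  have "Mb j \<le> (\<Sum>i=1..S. Mb i)"
    using assms(2) by (intro member_le_sum) auto
  then show ?thesis
    using padding assms(1) by (meson order_trans)
qed

lemma halves_le_padding: "i \<in> {1..S} \<Longrightarrow> left_half i + right_half i \<le> K i"
  using stretch_le_padding [of i "prev i"] stretch_le_padding [of i i] prev_mem
  unfolding left_half_def right_half_def by fastforce

lemma spin_padded_defect:
  assumes "1 \<le> y" "y \<le> int (sum_list (Dl i))"
  shows "spin_of (padded i) y = (-1) ^ block_index (Dl i) (nat (y - 1))"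
  using spin_of_defect [OF assms, of "[]" "replicate (K i) h"] unfolding padded_def by simp

lemma spin_padded_stretch:
  assumes i: "i \<in> {1..S}" and y: "1 \<le> y" "y \<le> int (K i * h)"
  shows "spin_of (padded i) (int (sum_list (Dl i)) + y) = alt_spin h y"
  using spin_of_periodic_part [OF h_pos y, of "[]" "Dl i" "[]"] even_length_defect [OF i]
  unfolding padded_def by simp

lemma spin_padded_left:
  assumes i: "i \<in> {1..S}" and y: "1 - int (K i * h) \<le> y" "y \<le> 0"
  shows "spin_of (padded i) y = alt_spin h y"
proof -
  have "spin_of (padded i) y = spin_of (padded i) (int (sum_list (Dl i)) + (int (K i * h) + y))"
    using spin_of_periodic [of "padded i" y] unfolding padded_def by (simp add: sum_list_replicate ac_simps)
  also have "\<dots> = alt_spin h (int (K i * h) + y)"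
    using y by (intro spin_padded_stretch i) auto
  also have "\<dots> = alt_spin h y"
    using alt_spin_periodic [OF h_pos, of "int (K i)" y] padding i by (simp add: ac_simps)
  finally show ?thesis .
qed

lemma stretch_halves:
  assumes i: "i \<in> {1..S}"
  shows "Mb (prev i) = 2 * left_half i" "Mb i = 2 * right_half i"
  using stretch_even [OF prev_mem [OF i]] stretch_even [OF i]
  unfolding left_half_def right_half_def by simp_all

lemma spin_chain_eq_spin_padded:
  assumes i: "i \<in> {1..S}"
    and y: "1 - int (left_half i * h) \<le> y" "y \<le> int (sum_list (Dl i)) + int (2 * right_half i * h)"
  shows "spin_of chain (y + int (offset i)) = spin_of (padded i) y"
proof -
  let ?D = "sum_list (Dl i)"
  consider "y \<le> 0" | "1 \<le> y" "y \<le> int ?D" | "int ?D + 1 \<le> y" by linarith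
  then show ?thesis
  proof cases
    case 1
    moreover have "int (left_half i * h) \<le> int (K i * h)"
      using halves_le_padding [OF i] by (intro of_nat_mono mult_le_mono1) linarith
    ultimately show ?thesis
      using spin_chain_prev_stretch [OF i, of y] spin_padded_left [OF i, of y] y stretch_halves [OF i]
      by (simp add: add.commute)
  next
    case 2
    then show ?thesis
      using spin_chain_defect [OF i, of y] spin_padded_defect [of y i] by (simp add: add.commute)
  next
    case 3
    moreover have "int (2 * right_half i * h) \<le> int (K i * h)"
      using stretch_le_padding [OF i i] stretch_halves [OF i] by (intro of_nat_mono mult_le_mono1) linarith
    ultimately show ?thesis
      using spin_chain_stretch [OF i, of "y - int ?D"] spin_padded_stretch [OF i, of "y - int ?D"] y
        stretch_halves [OF i]
      by (simp add: ac_simps)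
  qed
qed

lemma half_min_stretch_le:
  assumes i: "i \<in> {1..S}"
  shows "1 \<le> real (Min (Mb ` {1..S})) / 2"
    and "real (Min (Mb ` {1..S})) / 2 \<le> real (left_half i * h)"
    and "real (Min (Mb ` {1..S})) / 2 \<le> real (right_half i * h)"
proof -
  have "2 \<le> Min (Mb ` {1..S})"
    using S_pos by (subst Min_ge_iff) (auto intro: stretch_ge_2)
  then show "1 \<le> real (Min (Mb ` {1..S})) / 2"
    by simp
  have "Min (Mb ` {1..S}) \<le> Mb i" "Min (Mb ` {1..S}) \<le> Mb (prev i)"
    using i prev_mem [OF i] by (auto intro: Min_le)
  then have "real (Min (Mb ` {1..S})) / 2 \<le> real (left_half i)"
    and "real (Min (Mb ` {1..S})) / 2 \<le> real (right_half i)"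
    unfolding stretch_halves [OF i] by simp_all
  moreover have "real n \<le> real (n * h)" for n
    using h_pos by (intro of_nat_mono) (cases h, auto)
  ultimately show "real (Min (Mb ` {1..S})) / 2 \<le> real (left_half i * h)"
    and "real (Min (Mb ` {1..S})) / 2 \<le> real (right_half i * h)"
    by (meson order_trans)+
qed

lemma window_estimate:
  assumes p: "p > 1" and i: "i \<in> {1..S}"
  shows "\<bar>(\<Sum>y\<in>window i. site_energy p J (\<lambda>y. spin_of chain (y + int (offset i))) y
              - site_energy p J (spin_of (padded i)) y)
          - (\<Sum>y\<in>surplus i. site_energy p J (spin_of (padded i)) y - e_per p J h)\<bar>
      \<le> (12 * real h + 4 * real (sum_list (Dl i))) * tail_const p * (real (Min (Mb ` {1..S})) / 2) powr (1 - p)"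
  unfolding window_def surplus_def
proof (rule local_comparison_bound [OF p h_pos defect_size_pos [OF i] abs_spin_of_le abs_spin_of_le
      spin_chain_eq_spin_padded [OF i] _ _ _ halves_le_padding [OF i] half_min_stretch_le [OF i]])
  let ?D = "sum_list (Dl i)"
  show "spin_of chain (y + int (offset i)) = alt_spin h y"
    if "1 - int (left_half i * h) \<le> y" "y \<le> 0" for y
    using spin_chain_prev_stretch [OF i, of y] that stretch_halves [OF i] by (simp add: add.commute)
  show "spin_of chain (y + int (offset i)) = alt_spin h (y - int ?D)"
    if "int ?D + 1 \<le> y" "y \<le> int ?D + int (right_half i * h)" for y
    using spin_chain_stretch [OF i, of "y - int ?D"] that stretch_halves [OF i] by (simp add: ac_simps)
  show "spin_of (padded i) y = alt_spin h (y - int ?D)"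
    if "int ?D + 1 \<le> y" "y \<le> int ?D + int (K i * h)" for y
    using spin_padded_stretch [OF i, of "y - int ?D"] that by simp
qed

text \<open>The middle of the stretch after the i-th defect; cut_point 0 is the middle of the
  last stretch, one period to the left.\<close>

definition cut_point :: "nat \<Rightarrow> int" where
  "cut_point i = (if i = 0 then - int (left_half 1 * h)
     else int (offset i) + int (sum_list (Dl i)) + int (right_half i * h))"

lemma cut_point_prev:
  assumes i: "i \<in> {1..S}"
  shows "cut_point (i - 1) = int (offset i) - int (left_half i * h)"
proof (cases "i = 1")
  case False
  then obtain j where j: "i = Suc j" "j \<in> {1..S}" using i by (cases i) auto
  then have "offset i = offset j + sum_list (Dl j) + 2 * (right_half j * h)"
    using offset_Suc [of j] stretch_halves [OF j(2)] by simp
  moreover have "left_half i = right_half j"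
    unfolding left_half_def right_half_def prev_def using j by simp
  ultimately show ?thesis
    unfolding cut_point_def using j by simp
qed (use offset_1 in \<open>simp add: cut_point_def\<close>)

lemma cut_point_mono:
  assumes "i < S" shows "cut_point i \<le> cut_point (Suc i)"
proof -
  have "cut_point i = int (offset (Suc i)) - int (left_half (Suc i) * h)"
    using assms cut_point_prev [of "Suc i"] by simp
  moreover have "cut_point (Suc i) = int (offset (Suc i)) + int (sum_list (Dl (Suc i))) + int (right_half (Suc i) * h)"
    unfolding cut_point_def by simp
  ultimately show ?thesis
    by linarith
qed

lemma cut_point_last: "cut_point S = int (sum_list chain) - int (left_half 1 * h)"
  using offset_Suc [OF S_pos] stretch_halves [of S] S_pos
  unfolding cut_point_def chain_eq_prefix offset_def [symmetric] left_half_def prev_def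
  by simp

lemma F_arr_chain_eq_sum_windows:
  assumes p: "p > 1"
  shows "F_arr p J h chain
    = (\<Sum>i=1..S. \<Sum>y\<in>window i. site_energy p J (\<lambda>y. spin_of chain (y + int (offset i))) y - e_per p J h)"
proof -
  let ?g = "\<lambda>x. site_energy p J (spin_of chain) x - e_per p J h"
  have "F_arr p J h chain = (\<Sum>x\<in>{cut_point 0 + 1..cut_point S}. ?g x)"
    unfolding cut_point_last using F_arr_eq_sum_site_energy [OF p, of J h chain "- int (left_half 1 * h)"]
    by (simp add: cut_point_def add.commute)
  also have "\<dots> = (\<Sum>i=1..S. \<Sum>x\<in>{cut_point (i - 1) + 1..cut_point i}. ?g x)"
    by (rule sum_int_consecutive_intervals) (rule cut_point_mono)
  also have "\<dots> = (\<Sum>i=1..S. \<Sum>y\<in>window i. ?g (y + int (offset i)))"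
  proof (rule sum.cong [OF refl])
    fix i assume i: "i \<in> {1..S}"
    then have "cut_point i = int (offset i) + (int (sum_list (Dl i)) + int (right_half i * h))"
      by (simp add: cut_point_def)
    then show "(\<Sum>x\<in>{cut_point (i - 1) + 1..cut_point i}. ?g x) = (\<Sum>y\<in>window i. ?g (y + int (offset i)))"
      unfolding cut_point_prev [OF i] window_def
      by (intro sum.reindex_bij_witness [where j = "\<lambda>x. x - int (offset i)" and i = "\<lambda>y. y + int (offset i)"]) auto
  qed
  finally show ?thesis
    by (simp add: site_energy_shift)
qed

lemma F_arr_padded_eq_sum_windows:
  assumes p: "p > 1" and i: "i \<in> {1..S}"
  shows "F_arr p J h (padded i)
    = (\<Sum>y\<in>window i. site_energy p J (spin_of (padded i)) y - e_per p J h)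
      + (\<Sum>y\<in>surplus i. site_energy p J (spin_of (padded i)) y - e_per p J h)"
proof -
  let ?l = "int (left_half i * h)" and ?r = "int (right_half i * h)" and ?D = "int (sum_list (Dl i))"
  have "left_half i * h + right_half i * h \<le> K i * h"
    using halves_le_padding [OF i] by (metis add_mult_distrib mult_le_mono1)
  then have halves: "?l + ?r \<le> int (K i * h)"
    by linarith
  have "int (sum_list (padded i)) = ?D + int (K i * h)"
    unfolding padded_def by (simp add: sum_list_replicate)
  then have "F_arr p J h (padded i)
      = (\<Sum>y\<in>{1 - ?l..?D + int (K i * h) - ?l}. site_energy p J (spin_of (padded i)) y - e_per p J h)"
    using F_arr_eq_sum_site_energy [OF p, of J h "padded i" "- ?l"] by simp
  also have "\<dots> = (\<Sum>y\<in>window i. site_energy p J (spin_of (padded i)) y - e_per p J h)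
      + (\<Sum>y\<in>surplus i. site_energy p J (spin_of (padded i)) y - e_per p J h)"
    unfolding window_def surplus_def by (rule sum_int_interval_split) (use halves in linarith)+
  finally show ?thesis .
qed

lemma F_arr_chain_decomposition:
  assumes p: "p > 1" and D0: "(\<Sum>i=1..S. sum_list (Dl i)) \<le> D0"
  shows "\<bar>F_arr p J h chain - (\<Sum>i=1..S. F_arr p J h (padded i))\<bar>
    \<le> (12 * real h + 4) * real D0 * tail_const p * 2 powr (p - 1) * real (Min (Mb ` {1..S})) powr (1 - p)"
proof -
  let ?m = "real (Min (Mb ` {1..S}))"
  let ?g = "\<lambda>t. site_energy p J t"
  have "\<bar>F_arr p J h chain - (\<Sum>i=1..S. F_arr p J h (padded i))\<bar>
      = \<bar>\<Sum>i=1..S. (\<Sum>y\<in>window i. ?g (\<lambda>y. spin_of chain (y + int (offset i))) y - ?g (spin_of (padded i)) y)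
                   - (\<Sum>y\<in>surplus i. ?g (spin_of (padded i)) y - e_per p J h)\<bar>"
    unfolding F_arr_chain_eq_sum_windows [OF p] sum_subtractf [symmetric]
    by (intro arg_cong [where f = abs] sum.cong refl)
       (simp add: F_arr_padded_eq_sum_windows [OF p] sum_subtractf)
  also have "\<dots> \<le> (\<Sum>i=1..S. (12 * real h + 4 * real (sum_list (Dl i))) * tail_const p * (?m / 2) powr (1 - p))"
    by (rule order_trans [OF sum_abs sum_mono]) (rule window_estimate [OF p])
  also have "\<dots> \<le> (\<Sum>i=1..S. (12 * real h + 4) * real (sum_list (Dl i)) * tail_const p * (?m / 2) powr (1 - p))"
  proof (intro sum_mono mult_right_mono)
    fix i assume "i \<in> {1..S}"
    then have "1 \<le> real (sum_list (Dl i))"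
      using defect_size_pos by simp
    then show "12 * real h + 4 * real (sum_list (Dl i)) \<le> (12 * real h + 4) * real (sum_list (Dl i))"
      using mult_left_mono [of 1 "real (sum_list (Dl i))" "12 * real h"] by (simp add: algebra_simps)
  qed (use tail_const_pos [OF p] in auto)
  also have "\<dots> = (12 * real h + 4) * real (\<Sum>i=1..S. sum_list (Dl i)) * tail_const p * (?m / 2) powr (1 - p)"
    by (simp add: sum_distrib_left sum_distrib_right mult_ac)
  also have "\<dots> \<le> (12 * real h + 4) * real D0 * tail_const p * (?m / 2) powr (1 - p)"
    using tail_const_pos [OF p] by (intro mult_right_mono mult_left_mono of_nat_mono [OF D0]) auto
  also have "(?m / 2) powr (1 - p) = 2 powr (p - 1) * ?m powr (1 - p)"
  proof -
    have "(?m / 2) powr (1 - p) = ?m powr (1 - p) / 2 powr (1 - p)"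
      by (simp add: powr_divide)
    also have "\<dots> = 2 powr (p - 1) * ?m powr (1 - p)"
      using powr_minus [of "2::real" "1 - p"] by (simp add: divide_inverse)
    finally show ?thesis .
  qed
  finally show ?thesis
    by (simp add: mult_ac)
qed

end

theorem mainTheorem3:
  fixes p J :: real and hstar D0 :: nat
  assumes "standing p J hstar"
  shows "\<exists>C::real. \<forall>(S::nat) (Dl :: nat \<Rightarrow> nat list) (Mb :: nat \<Rightarrow> nat).
    S \<ge> 1
    \<longrightarrow> (\<forall>i\<in>{1..S}. Dl i \<noteq> [] \<and> (\<forall>x\<in>set (Dl i). x > 0))
    \<longrightarrow> (\<forall>i\<in>{1..S}. Mb i > 0 \<and> even (Mb i))
    \<longrightarrow> (\<Sum>i=1..S. sum_list (Dl i)) \<le> D0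
    \<longrightarrow> (\<forall>i\<in>{1..S}. \<forall>j\<in>{1..S}.
          even ((\<Sum>k=1..<i. length (Dl k) + Mb k) + length (Dl i))
          = even ((\<Sum>k=1..<j. length (Dl k) + Mb k) + length (Dl j)))
    \<longrightarrow> even (\<Sum>i=1..S. length (Dl i) + Mb i)
    \<longrightarrow> (let M = (\<Sum>i=1..S. Mb i);
             Dsz = (\<lambda>i. sum_list (Dl i));
             \<sigma> = concat (map (\<lambda>i. Dl i @ replicate (Mb i) hstar) [1..<S+1]);
             Ni = (\<lambda>i. M * hstar + 2 * hstar * (\<Sum>j=i+1..S. Dsz j div (2 * hstar))
                      + Dsz i + 2 * hstar * ((\<Sum>j=1..<i. Dsz j) div (2 * hstar)));
             \<delta> = (\<lambda>i. Dl i @ replicate ((Ni i - Dsz i) div hstar) hstar)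
         in \<bar>F_arr p J hstar \<sigma> - (\<Sum>i=1..S. F_arr p J hstar (\<delta> i))\<bar>
              \<le> C * real (Min (Mb ` {1..S})) powr (1 - p))"
proof -
  from assms have p: "p > 1" and h: "hstar > 0"
    unfolding standing_def by auto
  show ?thesis
  proof (intro exI [of _ "(12 * real hstar + 4) * real D0 * tail_const p * 2 powr (p - 1)"] allI impI,
      goal_cases)
    case (1 S Dl Mb)
    define K where "K i = (\<Sum>i=1..S. Mb i) + 2 * (\<Sum>j=i+1..S. sum_list (Dl j) div (2 * hstar))
      + 2 * ((\<Sum>j=1..<i. sum_list (Dl j)) div (2 * hstar))" for i
    have "even (\<Sum>i=1..S. Mb i)"
      using 1(3) by (intro dvd_sum) auto
    then have padding: "\<forall>i\<in>{1..S}. even (K i) \<and> (\<Sum>i=1..S. Mb i) \<le> K i"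
      by (simp add: K_def)
    interpret padded_defect_chain hstar S Dl Mb K
      by unfold_locales (rule h 1 padding)+
    show ?case
      unfolding Let_def chain_eq [symmetric] div_padding_length [OF h] K_def [symmetric] padded_def [symmetric]
      by (rule F_arr_chain_decomposition [OF p 1(4)])
  qed
qed

end
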